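(* Let $\mathcal{X}$ be a finite nonempty set of types, $n=(n_x)_{x\in\mathcal{X}}$ nonnegative integers, and $\Phi=(\Phi_{xy})_{x,y\in\mathcal{X}}$ a real matrix with $\Phi_{xy}=\Phi_{yx}$ for all $x,y$. Then: (i) a stable roommate matching exists if and only if $\mathcal{W}_{\mathcal{P}}(n,\Phi)=\mathcal{W}_{\mathcal{B}}(n,n,\Phi/2)$; (ii) every stable roommate matching $\mu$ achieves the maximal aggregate surplus, i.e. $S_R(\mu;\Phi)=\mathcal{W}_{\mathcal{P}}(n,\Phi)$; (iii) whenever $(\mu,u)$ is a stable outcome, the payoff vector $u$ (together with some antisymmetric matrix $A$) is an optimal solution of the program $$\min_{u\in\mathbb{R}^{\mathcal{X}},\,A\in\mathbb{R}^{\mathcal{X}\times\mathcal{X}}}\ \sum_x u_x n_x\quad\text{s.t. } u_x\ge 0,\ \ u_x+u_y\ge \Phi_{xy}+A_{xy},\ \ A_{xy}=-A_{yx}\ \text{ for all } x,y\in\mathcal{X}.$$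
   Context: Roommate matching with transferable utility: $n_x$ is the number of individuals of type $x$; a pair of types $\{x,y\}$ (possibly $x=y$) generates joint surplus $\Phi_{xy}$; singles get utility $0$. Feasible roommate matchings: $\mathcal{P}(n)=\{\mu=(\mu_{xy})_{x,y\in\mathcal{X}}:\ \mu_{xy}\in\mathbb{N},\ \mu_{xy}=\mu_{yx},\ 2\mu_{xx}+\sum_{y\neq x}\mu_{xy}\le n_x\ \forall x\}$. Total surplus $S_R(\mu;\Phi)=\sum_x\mu_{xx}\Phi_{xx}+\sum_{x\neq y}\mu_{xy}\Phi_{xy}/2$, and $\mathcal{W}_{\mathcal{P}}(n,\Phi)=\max_{\mu\in\mathcal{P}(n)}S_R(\mu;\Phi)$. Bipartite problem: $\mathcal{B}(n,n)=\{\nu\in\mathbb{N}^{\mathcal{X}\times\mathcal{X}}:\ \sum_y\nu_{xy}\le n_x\ \forall x,\ \sum_x\nu_{xy}\le n_y\ \forall y\}$ and $\mathcal{W}_{\mathcal{B}}(n,n,\Phi/2)=\max_{\nu\in\mathcal{B}(n,n)}\sum_{x,y}\nu_{xy}\Phi_{xy}/2$. An outcome is a pair $(\mu,u)$ with $\mu\in\mathcal{P}(n)$ and $u=(u_x)\in\mathbb{R}^{\mathcal{X}}$ (payoff of each type-$x$ individual) such that $\sum_x n_xu_x=S_R(\mu;\Phi)$. It is stable if $u_x\ge0$ and $u_x+u_y\ge\Phi_{xy}$ for all $x,y\in\mathcal{X}$. A matching $\mu\in\mathcal{P}(n)$ is a stable roommate matching if there is $u$ with $(\mu,u)$ a stable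 outcome. *)

theory Defs
  imports Complex_Main
begin

definition roommate_matchings :: "('x::finite \<Rightarrow> nat) \<Rightarrow> ('x \<Rightarrow> 'x \<Rightarrow> nat) set" where
  "roommate_matchings n = {\<mu>. (\<forall>x y. \<mu> x y = \<mu> y x) \<and>
     (\<forall>x. 2 * \<mu> x x + (\<Sum>y\<in>UNIV - {x}. \<mu> x y) \<le> n x)}"

definition S_R :: "('x::finite \<Rightarrow> 'x \<Rightarrow> nat) \<Rightarrow> ('x \<Rightarrow> 'x \<Rightarrow> real) \<Rightarrow> real" where
  "S_R \<mu> \<Phi> = (\<Sum>x\<in>UNIV. real (\<mu> x x) * \<Phi> x x)
              + (\<Sum>(x,y)\<in>{(x,y). x \<noteq> y}. real (\<mu> x y) * \<Phi> x y / 2)"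

definition W_P :: "('x::finite \<Rightarrow> nat) \<Rightarrow> ('x \<Rightarrow> 'x \<Rightarrow> real) \<Rightarrow> real" where
  "W_P n \<Phi> = Max ((\<lambda>\<mu>. S_R \<mu> \<Phi>) ` roommate_matchings n)"

definition bipartite_matchings :: "('x::finite \<Rightarrow> nat) \<Rightarrow> ('x \<Rightarrow> nat) \<Rightarrow> ('x \<Rightarrow> 'x \<Rightarrow> nat) set" where
  "bipartite_matchings n m = {\<nu>. (\<forall>x. (\<Sum>y\<in>UNIV. \<nu> x y) \<le> n x) \<and>
     (\<forall>y. (\<Sum>x\<in>UNIV. \<nu> x y) \<le> m y)}"

definition W_B :: "('x::finite \<Rightarrow> nat) \<Rightarrow> ('x \<Rightarrow> nat) \<Rightarrow> ('x \<Rightarrow> 'x \<Rightarrow> real) \<Rightarrow> real" where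
  "W_B n m \<Psi> = Max ((\<lambda>\<nu>. \<Sum>(x,y)\<in>UNIV. real (\<nu> x y) * \<Psi> x y) ` bipartite_matchings n m)"

definition is_outcome :: "('x::finite \<Rightarrow> nat) \<Rightarrow> ('x \<Rightarrow> 'x \<Rightarrow> real) \<Rightarrow> ('x \<Rightarrow> 'x \<Rightarrow> nat) \<Rightarrow> ('x \<Rightarrow> real) \<Rightarrow> bool" where
  "is_outcome n \<Phi> \<mu> u \<longleftrightarrow> \<mu> \<in> roommate_matchings n \<and> (\<Sum>x\<in>UNIV. real (n x) * u x) = S_R \<mu> \<Phi>"

definition stable_outcome :: "('x::finite \<Rightarrow> nat) \<Rightarrow> ('x \<Rightarrow> 'x \<Rightarrow> real) \<Rightarrow> ('x \<Rightarrow> 'x \<Rightarrow> nat) \<Rightarrow> ('x \<Rightarrow> real) \<Rightarrow> bool" where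
  "stable_outcome n \<Phi> \<mu> u \<longleftrightarrow> is_outcome n \<Phi> \<mu> u \<and>
     (\<forall>x. u x \<ge> 0) \<and> (\<forall>x y. u x + u y \<ge> \<Phi> x y)"

definition stable_roommate_matching :: "('x::finite \<Rightarrow> nat) \<Rightarrow> ('x \<Rightarrow> 'x \<Rightarrow> real) \<Rightarrow> ('x \<Rightarrow> 'x \<Rightarrow> nat) \<Rightarrow> bool" where
  "stable_roommate_matching n \<Phi> \<mu> \<longleftrightarrow> \<mu> \<in> roommate_matchings n \<and> (\<exists>u. stable_outcome n \<Phi> \<mu> u)"

definition dual_feasible :: "('x::finite \<Rightarrow> 'x \<Rightarrow> real) \<Rightarrow> ('x \<Rightarrow> real) \<Rightarrow> ('x \<Rightarrow> 'x \<Rightarrow> real) \<Rightarrow> bool" where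
  "dual_feasible \<Phi> u A \<longleftrightarrow> (\<forall>x. u x \<ge> 0) \<and> (\<forall>x y. u x + u y \<ge> \<Phi> x y + A x y)
     \<and> (\<forall>x y. A x y = - A y x)"

definition dual_optimal :: "('x::finite \<Rightarrow> nat) \<Rightarrow> ('x \<Rightarrow> 'x \<Rightarrow> real) \<Rightarrow> ('x \<Rightarrow> real) \<Rightarrow> ('x \<Rightarrow> 'x \<Rightarrow> real) \<Rightarrow> bool" where
  "dual_optimal n \<Phi> u A \<longleftrightarrow> dual_feasible \<Phi> u A \<and>
     (\<forall>u' A'. dual_feasible \<Phi> u' A' \<longrightarrow> (\<Sum>x\<in>UNIV. u x * real (n x)) \<le> (\<Sum>x\<in>UNIV. u' x * real (n x)))"

end

(*
  Doubling a roommate matching (a pair of two type-x individuals uses two units of n x) gives a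
  bipartite matching with the same value for the surplus Phi/2, so W_P <= W_B. Stable payoffs u
  give the bipartite dual solution (u/2, u/2), so W_B <= sum n u = S_R mu <= W_P: a stable matching
  is optimal and forces W_P = W_B. Averaging the dual constraints at (x, y) and (y, x) removes any
  antisymmetric A, which makes u optimal for the program in (u, A).

  Conversely, if W_P = W_B, take optimal payoffs (u, v) of the bipartite dual; by symmetry of Phi,
  w = u + v are stable payoffs for a surplus-maximising roommate matching. Strong duality for the
  bipartite problem is proved combinatorially: an optimal matching has no negative cycle in its
  residual network (else augmenting along a simple one would improve it), so shortest-walk
  potentials exist, and their differences are the dual variables.
*)

theory Submission
  imports Defs "HOL-Library.FuncSet"
begin

section \<open>Walks, cycles and potentials\<close>

fun walk_cost :: "('v \<Rightarrow> 'v \<Rightarrow> 'c::comm_monoid_add) \<Rightarrow> 'v list \<Rightarrow> 'c" where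
  "walk_cost c (v # w # vs) = c v w + walk_cost c (w # vs)"
| "walk_cost c _ = 0"

definition closed_walk :: "('v \<Rightarrow> 'v \<Rightarrow> bool) \<Rightarrow> 'v list \<Rightarrow> bool" where
  "closed_walk E vs \<longleftrightarrow> successively E vs \<and> vs \<noteq> [] \<and> hd vs = last vs"

lemma walk_cost_append:
  "walk_cost c (xs @ v # ys) = walk_cost c (xs @ [v]) + walk_cost c (v # ys)"
  by (induction xs rule: induct_list012) (auto simp: add.assoc)

lemma walk_cost_eq_sum_list: "walk_cost c vs = (\<Sum>(a, b)\<leftarrow>zip vs (tl vs). c a b)"
  by (induction c vs rule: walk_cost.induct) auto

lemma successively_iff_zip: "successively E vs \<longleftrightarrow> (\<forall>(a, b)\<in>set (zip vs (tl vs)). E a b)"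
  by (induction vs rule: induct_list012) auto

lemma successively_append_Cons:
  "successively E (xs @ v # ys) \<longleftrightarrow> successively E (xs @ [v]) \<and> successively E (v # ys)"
  by (induction xs rule: induct_list012) auto

lemma successively_remove_loop:
  assumes "successively E (xs @ y # ys @ y # zs)"
  shows "successively E (xs @ y # zs)" and "closed_walk E (y # ys @ [y])"
  using assms successively_append_Cons[of E xs y "ys @ y # zs"]
    successively_append_Cons[of E "y # ys" y zs] successively_append_Cons[of E xs y zs]
  by (auto simp: closed_walk_def)

lemma walk_cost_remove_loop:
  "walk_cost c (xs @ y # ys @ y # zs) = walk_cost c (xs @ y # zs) + walk_cost c (y # ys @ [y])"
  using walk_cost_append[of c xs y "ys @ y # zs"] walk_cost_append[of c "y # ys" y zs]
    walk_cost_append[of c xs y zs]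
  by (simp add: ac_simps)

lemma length_distinct_le_card:
  fixes vs :: "'v::finite list"
  assumes "distinct vs"
  shows "length vs \<le> card (UNIV :: 'v set)"
  using card_mono[of UNIV "set vs"] distinct_card[OF assms] by simp

lemma short_walk_exists:
  fixes E :: "'v::finite \<Rightarrow> 'v \<Rightarrow> bool" and c :: "'v \<Rightarrow> 'v \<Rightarrow> 'c::linordered_ab_group_add"
  assumes no_neg: "\<And>ws. closed_walk E ws \<Longrightarrow> 0 \<le> walk_cost c ws"
    and "successively E vs" "vs \<noteq> []"
  shows "\<exists>ws. successively E ws \<and> ws \<noteq> [] \<and> last ws = last vs \<and> length ws \<le> card (UNIV :: 'v set)
    \<and> walk_cost c ws \<le> walk_cost c vs"
  using assms(2,3)
proof (induction vs rule: length_induct)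
  case (1 vs)
  show ?case
  proof (cases "distinct vs")
    case True
    then show ?thesis using 1 length_distinct_le_card by blast
  next
    case False
    then obtain xs y ys zs where vs: "vs = xs @ y # ys @ y # zs"
      using not_distinct_decomp by fastforce
    have "successively E (xs @ y # zs)" and loop: "0 \<le> walk_cost c (y # ys @ [y])"
      using successively_remove_loop[of E xs y ys zs] no_neg 1(2) vs by auto
    moreover have "length (xs @ y # zs) < length vs" using vs by simp
    ultimately obtain ws where "successively E ws" "ws \<noteq> []" "last ws = last (xs @ y # zs)"
      "length ws \<le> card (UNIV :: 'v set)" "walk_cost c ws \<le> walk_cost c (xs @ y # zs)"
      using 1(1) by blast
    moreover have "last (xs @ y # zs) = last vs" using vs by (cases zs) auto
    moreover have "walk_cost c (xs @ y # zs) \<le> walk_cost c vs"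
      using walk_cost_remove_loop[of c xs y ys zs] loop vs by simp
    ultimately show ?thesis by force
  qed
qed

lemma potential_exists:
  fixes E :: "'v::finite \<Rightarrow> 'v \<Rightarrow> bool" and c :: "'v \<Rightarrow> 'v \<Rightarrow> 'c::linordered_ab_group_add"
  assumes no_neg: "\<And>ws. closed_walk E ws \<Longrightarrow> 0 \<le> walk_cost c ws"
  shows "\<exists>d. \<forall>v w. E v w \<longrightarrow> d w \<le> d v + c v w"
proof -
  \<comment> \<open>d v is the least cost of a walk ending in v; by short_walk_exists the minimum may be
    taken over the finitely many walks of length at most card UNIV.\<close>
  define S where "S v = {ws. successively E ws \<and> ws \<noteq> [] \<and> last ws = v \<and> length ws \<le> card (UNIV :: 'v set)}"
    for v
  define d where "d v = Min (walk_cost c ` S v)" for v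
  have finite_S: "finite (S v)" for v
    using finite_lists_length_le[OF finite_UNIV, of "card (UNIV :: 'v set)"]
    by (rule rev_finite_subset) (auto simp: S_def)
  have "[v] \<in> S v" for v
    by (simp add: S_def Suc_leI finite_UNIV_card_ge_0)
  then have d_attained: "\<exists>ws\<in>S v. walk_cost c ws = d v" for v
    using Min_in[of "walk_cost c ` S v"] finite_S unfolding d_def by fastforce
  have d_le: "d v \<le> walk_cost c ws" if "ws \<in> S v" for ws v
    unfolding d_def using finite_S that by simp
  show ?thesis
  proof (intro exI allI impI)
    fix v w assume "E v w"
    obtain ws where ws: "ws \<in> S v" "walk_cost c ws = d v"
      using d_attained by blast
    have ws_snoc: "ws = butlast ws @ [v]"
      using ws(1) unfolding S_def by (metis (mono_tags) append_butlast_last_id mem_Collect_eq)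
    have "successively E ws" using ws(1) by (simp add: S_def)
    then have "successively E (butlast ws @ [v])" using ws_snoc by metis
    with \<open>E v w\<close> have "successively E (butlast ws @ v # [w])"
      using successively_append_Cons[of E "butlast ws" v "[w]"] by simp
    from short_walk_exists[of E c, OF no_neg this] obtain ws' where
      "successively E ws'" "ws' \<noteq> []" "last ws' = w" "length ws' \<le> card (UNIV :: 'v set)"
      and ws'_cost: "walk_cost c ws' \<le> walk_cost c (butlast ws @ v # [w])"
      by auto
    then have ws': "ws' \<in> S w" by (simp add: S_def)
    have "walk_cost c (butlast ws @ v # [w]) = d v + c v w"
      using walk_cost_append[of c "butlast ws" v "[w]"] ws ws_snoc by simp
    then show "d w \<le> d v + c v w"
      using d_le[OF ws'] ws'_cost by simp
  qed
qed

lemma negative_closed_walk_imp_simple: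
  fixes c :: "'v \<Rightarrow> 'v \<Rightarrow> 'c::linordered_ab_group_add"
  assumes "closed_walk E vs" "walk_cost c vs < 0"
  shows "\<exists>ws. closed_walk E ws \<and> distinct (tl ws) \<and> walk_cost c ws < 0"
  using assms
proof (induction vs rule: length_induct)
  case (1 vs)
  then obtain v t where vs: "vs = v # t" by (cases vs) (auto simp: closed_walk_def)
  show ?case
  proof (cases "distinct t")
    case True
    then have "distinct (tl vs)" using vs by simp
    then show ?thesis using 1(2,3) by blast
  next
    case False
    then obtain xs y ys zs where t: "t = xs @ y # ys @ y # zs"
      using not_distinct_decomp by fastforce
    have "successively E vs" using 1(2) by (simp add: closed_walk_def)
    then have walk: "successively E ((v # xs) @ y # ys @ y # zs)" using vs t by simp
    show ?thesis
    proof (cases "walk_cost c (y # ys @ [y]) < 0")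
      case True
      have "length (y # ys @ [y]) < length vs" using vs t by simp
      from 1(1)[rule_format, OF this successively_remove_loop(2)[OF walk] True]
      show ?thesis .
    next
      case False
      have "closed_walk E ((v # xs) @ y # zs)"
        using 1(2) successively_remove_loop(1)[OF walk] vs t
        by (cases zs) (auto simp: closed_walk_def)
      moreover have "walk_cost c ((v # xs) @ y # zs) < 0"
        using walk_cost_remove_loop[of c "v # xs" y ys zs] False 1(3) vs t
        by (metis le_add_same_cancel1 le_less_trans not_less append_Cons)
      moreover have "length ((v # xs) @ y # zs) < length vs" using vs t by simp
      ultimately show ?thesis using 1(1) by blast
    qed
  qed
qed

lemma simple_closed_walk_edges:
  assumes "closed_walk E vs" "distinct (tl vs)"
  defines "Q \<equiv> set (zip vs (tl vs))"
  shows "inj_on fst Q" "inj_on snd Q" "fst ` Q = snd ` Q" "\<forall>(a, b)\<in>Q. E a b"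
    and "walk_cost c vs = (\<Sum>(a, b)\<in>Q. c a b)"
proof -
  define cs where "cs = butlast vs"
  have tl_vs: "tl vs = rotate1 cs"
  proof (cases vs rule: rev_cases)
    case (snoc ys y)
    then show ?thesis
      using assms(1) unfolding cs_def closed_walk_def by (cases ys) simp_all
  qed (use assms(1) in \<open>simp add: closed_walk_def\<close>)
  have "vs = cs @ [last vs]"
    using assms(1) by (simp add: cs_def closed_walk_def)
  moreover have "zip (cs @ [last vs]) (rotate1 cs) = zip cs (rotate1 cs)"
    by (simp add: zip_append1)
  ultimately have zip_vs: "zip vs (tl vs) = zip cs (rotate1 cs)"
    using tl_vs by metis
  have "distinct cs" using assms(2) tl_vs by simp
  have map_fst: "map fst (zip cs (rotate1 cs)) = cs" and map_snd: "map snd (zip cs (rotate1 cs)) = rotate1 cs"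
    by simp_all
  show "inj_on fst Q" "inj_on snd Q"
    unfolding Q_def zip_vs using \<open>distinct cs\<close> map_fst map_snd
    by (metis distinct_map distinct1_rotate)+
  show "fst ` Q = snd ` Q"
    unfolding Q_def zip_vs by (metis list.set_map map_fst map_snd set_rotate1)
  have "successively E vs" using assms(1) by (simp add: closed_walk_def)
  then show "\<forall>(a, b)\<in>Q. E a b"
    unfolding Q_def successively_iff_zip .
  have "distinct (zip vs (tl vs))"
    using assms(2) by (rule distinct_zipI2)
  then show "walk_cost c vs = (\<Sum>(a, b)\<in>Q. c a b)"
    unfolding Q_def walk_cost_eq_sum_list by (simp add: sum_list_distinct_conv_sum_set)
qed

section \<open>Bipartite matchings and weak duality\<close>

definition row_sum :: "('x::finite \<Rightarrow> 'x \<Rightarrow> nat) \<Rightarrow> 'x \<Rightarrow> nat" where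
  "row_sum \<nu> x = (\<Sum>y\<in>UNIV. \<nu> x y)"

definition col_sum :: "('x::finite \<Rightarrow> 'x \<Rightarrow> nat) \<Rightarrow> 'x \<Rightarrow> nat" where
  "col_sum \<nu> y = (\<Sum>x\<in>UNIV. \<nu> x y)"

definition bipartite_value :: "('x::finite \<Rightarrow> 'x \<Rightarrow> real) \<Rightarrow> ('x \<Rightarrow> 'x \<Rightarrow> nat) \<Rightarrow> real" where
  "bipartite_value \<Psi> \<nu> = (\<Sum>x\<in>UNIV. \<Sum>y\<in>UNIV. real (\<nu> x y) * \<Psi> x y)"

lemma bipartite_matchings_iff:
  "\<nu> \<in> bipartite_matchings n m \<longleftrightarrow> (\<forall>x. row_sum \<nu> x \<le> n x) \<and> (\<forall>y. col_sum \<nu> y \<le> m y)"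
  by (simp add: bipartite_matchings_def row_sum_def col_sum_def)

lemma bipartite_value_mono:
  assumes "\<And>x y. \<Psi> x y \<le> \<Psi>' x y"
  shows "bipartite_value \<Psi> \<nu> \<le> bipartite_value \<Psi>' \<nu>"
  unfolding bipartite_value_def by (intro sum_mono mult_left_mono assms) simp

lemma bipartite_value_separable:
  "bipartite_value (\<lambda>x y. u x + v y) \<nu>
    = (\<Sum>x\<in>UNIV. real (row_sum \<nu> x) * u x) + (\<Sum>y\<in>UNIV. real (col_sum \<nu> y) * v y)"
proof -
  have "bipartite_value (\<lambda>x y. u x + v y) \<nu>
      = (\<Sum>x\<in>UNIV. \<Sum>y\<in>UNIV. real (\<nu> x y) * u x) + (\<Sum>x\<in>UNIV. \<Sum>y\<in>UNIV. real (\<nu> x y) * v y)"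
    by (simp add: bipartite_value_def distrib_left sum.distrib)
  also have "(\<Sum>x\<in>UNIV. \<Sum>y\<in>UNIV. real (\<nu> x y) * v y) = (\<Sum>y\<in>UNIV. \<Sum>x\<in>UNIV. real (\<nu> x y) * v y)"
    by (rule sum.swap)
  finally show ?thesis
    by (simp add: row_sum_def col_sum_def sum_distrib_right)
qed

lemma bipartite_weak_duality:
  assumes "\<nu> \<in> bipartite_matchings n m" "\<And>x. 0 \<le> u x" "\<And>y. 0 \<le> v y"
    and "\<And>x y. \<Psi> x y \<le> u x + v y"
  shows "bipartite_value \<Psi> \<nu> \<le> (\<Sum>x\<in>UNIV. real (n x) * u x) + (\<Sum>y\<in>UNIV. real (m y) * v y)"
proof -
  have "bipartite_value \<Psi> \<nu> \<le> bipartite_value (\<lambda>x y. u x + v y) \<nu>"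
    using assms(4) by (rule bipartite_value_mono)
  also have "\<dots> \<le> (\<Sum>x\<in>UNIV. real (n x) * u x) + (\<Sum>y\<in>UNIV. real (m y) * v y)"
    unfolding bipartite_value_separable
    using assms(1-3) by (intro add_mono sum_mono mult_right_mono) (auto simp: bipartite_matchings_iff)
  finally show ?thesis .
qed

lemma bipartite_complementary_slackness:
  assumes "\<nu> \<in> bipartite_matchings n m"
    and "\<And>x. row_sum \<nu> x < n x \<Longrightarrow> u x = 0" "\<And>y. col_sum \<nu> y < m y \<Longrightarrow> v y = 0"
    and "\<And>x y. 0 < \<nu> x y \<Longrightarrow> u x + v y = \<Psi> x y"
  shows "(\<Sum>x\<in>UNIV. real (n x) * u x) + (\<Sum>y\<in>UNIV. real (m y) * v y) = bipartite_value \<Psi> \<nu>"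
proof -
  have "(\<Sum>x\<in>UNIV. real (n x) * u x) = (\<Sum>x\<in>UNIV. real (row_sum \<nu> x) * u x)"
    using assms(1,2) by (intro sum.cong refl) (metis bipartite_matchings_iff le_neq_implies_less mult_zero_right)
  moreover have "(\<Sum>y\<in>UNIV. real (m y) * v y) = (\<Sum>y\<in>UNIV. real (col_sum \<nu> y) * v y)"
    using assms(1,3) by (intro sum.cong refl) (metis bipartite_matchings_iff le_neq_implies_less mult_zero_right)
  moreover have "bipartite_value (\<lambda>x y. u x + v y) \<nu> = bipartite_value \<Psi> \<nu>"
    unfolding bipartite_value_def using assms(4)
    by (intro sum.cong refl) (metis mult_eq_0_iff of_nat_0 neq0_conv)
  ultimately show ?thesis
    by (simp add: bipartite_value_separable)
qed

section \<open>The residual network of a bipartite matching\<close>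

datatype 'x node = Source | Row 'x | Col 'x

lemma UNIV_node: "UNIV = insert Source (range Row \<union> range Col)"
proof (rule set_eqI)
  fix a :: "'x node"
  show "a \<in> UNIV \<longleftrightarrow> a \<in> insert Source (range Row \<union> range Col)" by (cases a) auto
qed

instance node :: (finite) finite
  by standard (simp add: UNIV_node)

lemma sum_UNIV_node:
  fixes f :: "'x::finite node \<Rightarrow> 'a::comm_monoid_add"
  shows "(\<Sum>a\<in>UNIV. f a) = f Source + (\<Sum>x\<in>UNIV. f (Row x)) + (\<Sum>y\<in>UNIV. f (Col y))"
proof -
  have "(\<Sum>a\<in>UNIV. f a) = f Source + (\<Sum>a\<in>range Row \<union> range Col. f a)"
    unfolding UNIV_node by (subst sum.insert) auto
  also have "(\<Sum>a\<in>range Row \<union> range Col. f a) = (\<Sum>a\<in>range Row. f a) + (\<Sum>a\<in>range Col. f a)"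
    by (rule sum.union_disjoint) auto
  finally show ?thesis
    by (simp add: sum.reindex inj_on_def add.assoc)
qed

(* An arc Row x -> Col y adds a pair (x, y) and Col y -> Row x removes one; through Source a
   cycle can add to row x or column y only where that capacity is slack. *)
fun residual_edge ::
  "('x::finite \<Rightarrow> nat) \<Rightarrow> ('x \<Rightarrow> nat) \<Rightarrow> ('x \<Rightarrow> 'x \<Rightarrow> nat) \<Rightarrow> 'x node \<Rightarrow> 'x node \<Rightarrow> bool" where
  "residual_edge n m \<nu> (Row x) (Col y) \<longleftrightarrow> True"
| "residual_edge n m \<nu> (Col y) (Row x) \<longleftrightarrow> 0 < \<nu> x y"
| "residual_edge n m \<nu> Source (Row x) \<longleftrightarrow> row_sum \<nu> x < n x"
| "residual_edge n m \<nu> (Row x) Source \<longleftrightarrow> True"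
| "residual_edge n m \<nu> Source (Col y) \<longleftrightarrow> True"
| "residual_edge n m \<nu> (Col y) Source \<longleftrightarrow> col_sum \<nu> y < m y"
| "residual_edge n m \<nu> _ _ \<longleftrightarrow> False"

fun residual_cost :: "('x \<Rightarrow> 'x \<Rightarrow> real) \<Rightarrow> 'x node \<Rightarrow> 'x node \<Rightarrow> real" where
  "residual_cost \<Psi> (Row x) (Col y) = - \<Psi> x y"
| "residual_cost \<Psi> (Col y) (Row x) = \<Psi> x y"
| "residual_cost \<Psi> _ _ = 0"

definition augment :: "('x \<Rightarrow> 'x \<Rightarrow> nat) \<Rightarrow> ('x node \<times> 'x node) set \<Rightarrow> 'x \<Rightarrow> 'x \<Rightarrow> nat" where
  "augment \<nu> Q x y = \<nu> x y + of_bool ((Row x, Col y) \<in> Q) - of_bool ((Col y, Row x) \<in> Q)"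

(* One row or column of augment: a simple cycle adds at most one unit there, and only through
   slack capacity or together with a removed unit. *)
lemma sum_augment_le:
  fixes f :: "'y::finite \<Rightarrow> nat" and P M :: "'y set"
  assumes "sum f UNIV \<le> k" "\<forall>y\<in>M. 0 < f y" "card P \<le> 1"
    and "P \<noteq> {} \<Longrightarrow> sum f UNIV < k \<or> M \<noteq> {}"
  shows "(\<Sum>y\<in>UNIV. f y + of_bool (y \<in> P) - of_bool (y \<in> M)) \<le> k"
proof -
  have "int (\<Sum>y\<in>UNIV. f y + of_bool (y \<in> P) - of_bool (y \<in> M))
      = (\<Sum>y\<in>UNIV. int (f y) + of_bool (y \<in> P) - of_bool (y \<in> M))"
    using assms(2) by (simp add: of_nat_diff Suc_leI)
  also have "\<dots> = int (sum f UNIV) + int (card P) - int (card M)"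
    by (simp add: sum.distrib sum_subtractf)
  also have "\<dots> \<le> int k"
  proof (cases "P = {}")
    case True
    then have "card P = 0" by simp
    then show ?thesis using assms(1) by linarith
  next
    case False
    then consider "sum f UNIV < k" | "M \<noteq> {}" using assms(4) by blast
    then show ?thesis
    proof cases
      case 1
      then show ?thesis using assms(3) by linarith
    next
      case 2
      then have "1 \<le> card M" by (simp add: Suc_leI card_gt_0_iff)
      then show ?thesis using assms(1,3) by linarith
    qed
  qed
  finally show ?thesis by (simp only: of_nat_le_iff)
qed

lemma row_sum_augment_le:
  assumes \<nu>: "\<nu> \<in> bipartite_matchings n m"
    and edges: "\<forall>(a, b)\<in>Q. residual_edge n m \<nu> a b"
    and inj: "inj_on fst Q" and closed: "fst ` Q = snd ` Q"
  shows "row_sum (augment \<nu> Q) x \<le> n x"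
proof -
  let ?P = "{y. (Row x, Col y) \<in> Q}" and ?M = "{y. (Col y, Row x) \<in> Q}"
  have "y = y'" if "(Row x, Col y) \<in> Q" "(Row x, Col y') \<in> Q" for y y'
    using inj_onD[OF inj _ that] by simp
  then have "card ?P \<le> 1" by (auto simp: card_le_Suc0_iff_eq)
  moreover have "row_sum \<nu> x < n x \<or> ?M \<noteq> {}" if "?P \<noteq> {}"
  proof -
    from that obtain y where "(Row x, Col y) \<in> Q" by blast
    then have "Row x \<in> snd ` Q" using closed by force
    then obtain a where "(a, Row x) \<in> Q" by force
    then show ?thesis using edges by (cases a) auto
  qed
  moreover have "\<forall>y\<in>?M. 0 < \<nu> x y" using edges by fastforce
  moreover have "row_sum \<nu> x \<le> n x" using \<nu> by (simp add: bipartite_matchings_iff)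
  ultimately show ?thesis
    using sum_augment_le[of "\<nu> x" "n x" ?M ?P] by (simp add: row_sum_def augment_def)
qed

lemma col_sum_augment_le:
  assumes \<nu>: "\<nu> \<in> bipartite_matchings n m"
    and edges: "\<forall>(a, b)\<in>Q. residual_edge n m \<nu> a b"
    and inj: "inj_on snd Q" and closed: "fst ` Q = snd ` Q"
  shows "col_sum (augment \<nu> Q) y \<le> m y"
proof -
  let ?P = "{x. (Row x, Col y) \<in> Q}" and ?M = "{x. (Col y, Row x) \<in> Q}"
  have "x = x'" if "(Row x, Col y) \<in> Q" "(Row x', Col y) \<in> Q" for x x'
    using inj_onD[OF inj _ that] by simp
  then have "card ?P \<le> 1" by (auto simp: card_le_Suc0_iff_eq)
  moreover have "col_sum \<nu> y < m y \<or> ?M \<noteq> {}" if "?P \<noteq> {}"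
  proof -
    from that obtain x where "(Row x, Col y) \<in> Q" by blast
    then have "Col y \<in> fst ` Q" using closed by force
    then obtain b where "(Col y, b) \<in> Q" by force
    then show ?thesis using edges by (cases b) auto
  qed
  moreover have "\<forall>x\<in>?M. 0 < \<nu> x y" using edges by fastforce
  moreover have "col_sum \<nu> y \<le> m y" using \<nu> by (simp add: bipartite_matchings_iff)
  ultimately show ?thesis
    using sum_augment_le[of "\<lambda>x. \<nu> x y" "m y" ?M ?P] by (simp add: col_sum_def augment_def)
qed

lemma sum_residual_cost:
  fixes Q :: "('x::finite node \<times> 'x node) set"
  shows "(\<Sum>(a, b)\<in>Q. residual_cost \<Psi> a b)
    = (\<Sum>x\<in>UNIV. \<Sum>y\<in>UNIV. if (Col y, Row x) \<in> Q then \<Psi> x y else 0)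
    - (\<Sum>x\<in>UNIV. \<Sum>y\<in>UNIV. if (Row x, Col y) \<in> Q then \<Psi> x y else 0)"
proof -
  have if_neg: "(if P then - a else 0) = - (if P then a else 0)" for P and a :: real
    by simp
  have "(\<Sum>(a, b)\<in>Q. residual_cost \<Psi> a b)
      = (\<Sum>(a, b)\<in>UNIV. if (a, b) \<in> Q then residual_cost \<Psi> a b else 0)"
    by (rule sum.mono_neutral_cong_left) auto
  also have "\<dots> = (\<Sum>a\<in>UNIV. \<Sum>b\<in>UNIV. if (a, b) \<in> Q then residual_cost \<Psi> a b else 0)"
    unfolding sum.cartesian_product UNIV_Times_UNIV ..
  also have "\<dots> = (\<Sum>y\<in>UNIV. \<Sum>x\<in>UNIV. if (Col y, Row x) \<in> Q then \<Psi> x y else 0)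
    - (\<Sum>x\<in>UNIV. \<Sum>y\<in>UNIV. if (Row x, Col y) \<in> Q then \<Psi> x y else 0)"
    by (simp add: if_neg sum_UNIV_node sum_negf cong: if_cong)
  also have "(\<Sum>y\<in>UNIV. \<Sum>x\<in>UNIV. if (Col y, Row x) \<in> Q then \<Psi> x y else 0)
      = (\<Sum>x\<in>UNIV. \<Sum>y\<in>UNIV. if (Col y, Row x) \<in> Q then \<Psi> x y else 0)"
    by (rule sum.swap)
  finally show ?thesis .
qed

lemma bipartite_value_augment:
  assumes edges: "\<forall>(a, b)\<in>Q. residual_edge n m \<nu> a b"
  shows "bipartite_value \<Psi> (augment \<nu> Q) = bipartite_value \<Psi> \<nu> - (\<Sum>(a, b)\<in>Q. residual_cost \<Psi> a b)"
proof -
  have "real (augment \<nu> Q x y) * \<Psi> x y = real (\<nu> x y) * \<Psi> x y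
      + (if (Row x, Col y) \<in> Q then \<Psi> x y else 0) - (if (Col y, Row x) \<in> Q then \<Psi> x y else 0)" for x y
    using edges by (auto simp: augment_def algebra_simps)
  then show ?thesis
    by (simp add: bipartite_value_def sum_residual_cost sum.distrib sum_subtractf)
qed

lemma optimal_no_negative_residual_cycle:
  assumes \<nu>: "\<nu> \<in> bipartite_matchings n m"
    and opt: "\<forall>\<nu>'\<in>bipartite_matchings n m. bipartite_value \<Psi> \<nu>' \<le> bipartite_value \<Psi> \<nu>"
    and "closed_walk (residual_edge n m \<nu>) vs"
  shows "0 \<le> walk_cost (residual_cost \<Psi>) vs"
proof (rule ccontr)
  assume "\<not> ?thesis"
  then obtain ws where ws: "closed_walk (residual_edge n m \<nu>) ws" "distinct (tl ws)"
    "walk_cost (residual_cost \<Psi>) ws < 0"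
    using negative_closed_walk_imp_simple[OF assms(3)] by force
  define Q where "Q = set (zip ws (tl ws))"
  note Q = simple_closed_walk_edges[OF ws(1,2), folded Q_def]
  have "augment \<nu> Q \<in> bipartite_matchings n m"
    using row_sum_augment_le[OF \<nu> Q(4) Q(1,3)] col_sum_augment_le[OF \<nu> Q(4) Q(2,3)]
    by (simp add: bipartite_matchings_iff)
  moreover have "bipartite_value \<Psi> \<nu> < bipartite_value \<Psi> (augment \<nu> Q)"
    using bipartite_value_augment[OF Q(4)] Q(5)[of "residual_cost \<Psi>"] ws(3) by simp
  ultimately show False using opt by fastforce
qed

theorem bipartite_strong_duality:
  assumes \<nu>: "\<nu> \<in> bipartite_matchings n m"
    and opt: "\<forall>\<nu>'\<in>bipartite_matchings n m. bipartite_value \<Psi> \<nu>' \<le> bipartite_value \<Psi> \<nu>"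
  obtains u v where "\<And>x. 0 \<le> u x" "\<And>y. 0 \<le> v y" "\<And>x y. \<Psi> x y \<le> u x + v y"
    "(\<Sum>x\<in>UNIV. real (n x) * u x) + (\<Sum>y\<in>UNIV. real (m y) * v y) = bipartite_value \<Psi> \<nu>"
proof -
  obtain d where d: "\<And>a b. residual_edge n m \<nu> a b \<Longrightarrow> d b \<le> d a + residual_cost \<Psi> a b"
    using potential_exists optimal_no_negative_residual_cycle[OF \<nu> opt] by metis
  \<comment> \<open>Arcs at Source give nonnegativity and slackness; arcs between Row and Col give
    feasibility and tightness on the support of \<nu>.\<close>
  define u where "u x = d (Row x) - d Source" for x
  define v where "v y = d Source - d (Col y)" for y
  have u_nonneg: "0 \<le> u x" for x
    using d[of "Row x" Source] by (simp add: u_def)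
  moreover have v_nonneg: "0 \<le> v y" for y
    using d[of Source "Col y"] by (simp add: v_def)
  moreover have feasible: "\<Psi> x y \<le> u x + v y" for x y
    using d[of "Row x" "Col y"] by (simp add: u_def v_def)
  moreover have "(\<Sum>x\<in>UNIV. real (n x) * u x) + (\<Sum>y\<in>UNIV. real (m y) * v y) = bipartite_value \<Psi> \<nu>"
  proof (rule bipartite_complementary_slackness[OF \<nu>])
    show "u x = 0" if "row_sum \<nu> x < n x" for x
      using that d[of Source "Row x"] u_nonneg[of x] by (simp add: u_def)
    show "v y = 0" if "col_sum \<nu> y < m y" for y
      using that d[of "Col y" Source] v_nonneg[of y] by (simp add: v_def)
    show "u x + v y = \<Psi> x y" if "0 < \<nu> x y" for x y
      using that d[of "Col y" "Row x"] feasible[of x y] by (simp add: u_def v_def)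
  qed
  ultimately show thesis by (rule that)
qed

section \<open>Roommate matchings\<close>

lemma finite_bounded_matrices:
  "finite {f :: 'x::finite \<Rightarrow> 'y::finite \<Rightarrow> nat. \<forall>x y. f x y \<le> N x}"
proof -
  have "{f :: 'x \<Rightarrow> 'y \<Rightarrow> nat. \<forall>x y. f x y \<le> N x} = (\<Pi>\<^sub>E x\<in>UNIV. \<Pi>\<^sub>E y\<in>UNIV. {..N x})"
    by (auto simp: PiE_UNIV_domain)
  then show ?thesis by (simp add: finite_PiE)
qed

lemma finite_bipartite_matchings: "finite (bipartite_matchings n m)"
proof (rule finite_subset[OF _ finite_bounded_matrices])
  have "\<nu> x y \<le> n x" if "\<nu> \<in> bipartite_matchings n m" for \<nu> x y
  proof -
    have "\<nu> x y \<le> row_sum \<nu> x"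
      unfolding row_sum_def by (rule member_le_sum) auto
    also have "\<dots> \<le> n x"
      using that by (simp add: bipartite_matchings_iff)
    finally show ?thesis .
  qed
  then show "bipartite_matchings n m \<subseteq> {\<nu>. \<forall>x y. \<nu> x y \<le> n x}" by blast
qed

lemma finite_roommate_matchings: "finite (roommate_matchings n)"
proof (rule finite_subset[OF _ finite_bounded_matrices])
  have "\<mu> x y \<le> n x" if "\<mu> \<in> roommate_matchings n" for \<mu> x y
  proof -
    have "2 * \<mu> x x + (\<Sum>y\<in>UNIV - {x}. \<mu> x y) \<le> n x"
      using that unfolding roommate_matchings_def by blast
    moreover have "x \<noteq> y \<Longrightarrow> \<mu> x y \<le> (\<Sum>y\<in>UNIV - {x}. \<mu> x y)"
      by (rule member_le_sum) auto
    ultimately show ?thesis by (cases "x = y") auto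
  qed
  then show "roommate_matchings n \<subseteq> {\<mu>. \<forall>x y. \<mu> x y \<le> n x}" by blast
qed

lemma zero_in_roommate_matchings: "(\<lambda>_ _. 0) \<in> roommate_matchings n"
  by (simp add: roommate_matchings_def)

lemma zero_in_bipartite_matchings: "(\<lambda>_ _. 0) \<in> bipartite_matchings n m"
  by (simp add: bipartite_matchings_def)

lemma W_P_ge: "\<mu> \<in> roommate_matchings n \<Longrightarrow> S_R \<mu> \<Phi> \<le> W_P n \<Phi>"
  unfolding W_P_def by (rule Max_ge) (simp_all add: finite_roommate_matchings)

lemma W_P_attained:
  obtains \<mu> where "\<mu> \<in> roommate_matchings n" "S_R \<mu> \<Phi> = W_P n \<Phi>"
  using Max_in[of "(\<lambda>\<mu>. S_R \<mu> \<Phi>) ` roommate_matchings n"]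
    finite_roommate_matchings zero_in_roommate_matchings
  unfolding W_P_def by fastforce

lemma W_B_eq_Max: "W_B n m \<Psi> = Max (bipartite_value \<Psi> ` bipartite_matchings n m)"
proof -
  have "(\<Sum>(x, y)\<in>UNIV. real (\<nu> x y) * \<Psi> x y) = bipartite_value \<Psi> \<nu>" for \<nu>
    unfolding bipartite_value_def sum.cartesian_product UNIV_Times_UNIV ..
  then show ?thesis by (simp add: W_B_def)
qed

lemma W_B_ge: "\<nu> \<in> bipartite_matchings n m \<Longrightarrow> bipartite_value \<Psi> \<nu> \<le> W_B n m \<Psi>"
  unfolding W_B_eq_Max by (rule Max_ge) (simp_all add: finite_bipartite_matchings)

lemma W_B_attained:
  obtains \<nu> where "\<nu> \<in> bipartite_matchings n m" "bipartite_value \<Psi> \<nu> = W_B n m \<Psi>"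
  using Max_in[of "bipartite_value \<Psi> ` bipartite_matchings n m"]
    finite_bipartite_matchings zero_in_bipartite_matchings
  unfolding W_B_eq_Max by fastforce

definition double_matching :: "('x \<Rightarrow> 'x \<Rightarrow> nat) \<Rightarrow> 'x \<Rightarrow> 'x \<Rightarrow> nat" where
  "double_matching \<mu> x y = (if x = y then 2 * \<mu> x x else \<mu> x y)"

lemma row_sum_double_matching:
  "row_sum (double_matching \<mu>) x = 2 * \<mu> x x + (\<Sum>y\<in>UNIV - {x}. \<mu> x y)"
proof -
  have "row_sum (double_matching \<mu>) x
      = double_matching \<mu> x x + (\<Sum>y\<in>UNIV - {x}. double_matching \<mu> x y)"
    unfolding row_sum_def by (rule sum.remove) auto
  also have "double_matching \<mu> x x = 2 * \<mu> x x"
    by (simp add: double_matching_def)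
  also have "(\<Sum>y\<in>UNIV - {x}. double_matching \<mu> x y) = (\<Sum>y\<in>UNIV - {x}. \<mu> x y)"
    by (rule sum.cong) (auto simp: double_matching_def)
  finally show ?thesis .
qed

lemma double_matching_in_bipartite_matchings:
  assumes "\<mu> \<in> roommate_matchings n"
  shows "double_matching \<mu> \<in> bipartite_matchings n n"
proof -
  have "\<mu> x y = \<mu> y x" for x y
    using assms unfolding roommate_matchings_def by blast
  then have "col_sum (double_matching \<mu>) y = row_sum (double_matching \<mu>) y" for y
    unfolding col_sum_def row_sum_def double_matching_def by (intro sum.cong refl) metis
  then show ?thesis
    using assms unfolding bipartite_matchings_iff row_sum_double_matching roommate_matchings_def
    by simp
qed

lemma S_R_eq_bipartite_value:
  "S_R \<mu> \<Phi> = bipartite_value (\<lambda>x y. \<Phi> x y / 2) (double_matching \<mu>)"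
proof -
  have "(\<Sum>(x, y)\<in>{(x, y). x \<noteq> y}. real (\<mu> x y) * \<Phi> x y / 2)
      = (\<Sum>(x, y)\<in>UNIV. if x \<noteq> y then real (\<mu> x y) * \<Phi> x y / 2 else 0)"
    by (rule sum.mono_neutral_cong_left) auto
  also have "\<dots> = (\<Sum>x\<in>UNIV. \<Sum>y\<in>UNIV. if x \<noteq> y then real (\<mu> x y) * \<Phi> x y / 2 else 0)"
    unfolding sum.cartesian_product UNIV_Times_UNIV ..
  finally have "S_R \<mu> \<Phi> = (\<Sum>x\<in>UNIV. real (\<mu> x x) * \<Phi> x x)
      + (\<Sum>x\<in>UNIV. \<Sum>y\<in>UNIV. if x \<noteq> y then real (\<mu> x y) * \<Phi> x y / 2 else 0)"
    by (simp add: S_R_def)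
  moreover have "bipartite_value (\<lambda>x y. \<Phi> x y / 2) (double_matching \<mu>)
      = (\<Sum>x\<in>UNIV. \<Sum>y\<in>UNIV. (if y = x then real (\<mu> x x) * \<Phi> x x else 0)
          + (if x \<noteq> y then real (\<mu> x y) * \<Phi> x y / 2 else 0))"
    unfolding bipartite_value_def by (intro sum.cong refl) (simp add: double_matching_def)
  ultimately show ?thesis
    by (simp add: sum.distrib)
qed

lemma W_P_le_W_B: "W_P n \<Phi> \<le> W_B n n (\<lambda>x y. \<Phi> x y / 2)"
proof -
  obtain \<mu> where "\<mu> \<in> roommate_matchings n" "S_R \<mu> \<Phi> = W_P n \<Phi>"
    by (rule W_P_attained)
  then show ?thesis
    using W_B_ge[OF double_matching_in_bipartite_matchings] S_R_eq_bipartite_value by metis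
qed

lemma W_B_le_payoffs:
  assumes "\<And>x. 0 \<le> u x" "\<And>x y. \<Phi> x y \<le> u x + u y"
  shows "W_B n n (\<lambda>x y. \<Phi> x y / 2) \<le> (\<Sum>x\<in>UNIV. real (n x) * u x)"
proof -
  obtain \<nu> where \<nu>: "\<nu> \<in> bipartite_matchings n n"
    and "bipartite_value (\<lambda>x y. \<Phi> x y / 2) \<nu> = W_B n n (\<lambda>x y. \<Phi> x y / 2)"
    by (rule W_B_attained)
  then have "W_B n n (\<lambda>x y. \<Phi> x y / 2) = bipartite_value (\<lambda>x y. \<Phi> x y / 2) \<nu>" by simp
  also have "\<dots> \<le> (\<Sum>x\<in>UNIV. real (n x) * (u x / 2)) + (\<Sum>y\<in>UNIV. real (n y) * (u y / 2))"
    using assms by (intro bipartite_weak_duality[OF \<nu>]) (simp_all add: add_divide_distrib[symmetric])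
  also have "\<dots> = (\<Sum>x\<in>UNIV. real (n x) * u x)"
    unfolding sum.distrib[symmetric] by (simp add: mult.commute)
  finally show ?thesis .
qed

lemma stable_outcome_value:
  assumes "stable_outcome n \<Phi> \<mu> u"
  shows "S_R \<mu> \<Phi> = W_P n \<Phi>" "W_P n \<Phi> = W_B n n (\<lambda>x y. \<Phi> x y / 2)"
proof -
  have \<mu>: "\<mu> \<in> roommate_matchings n" and payoff_sum: "(\<Sum>x\<in>UNIV. real (n x) * u x) = S_R \<mu> \<Phi>"
    and u_nonneg: "\<And>x. 0 \<le> u x" and u_stable: "\<And>x y. \<Phi> x y \<le> u x + u y"
    using assms by (auto simp: stable_outcome_def is_outcome_def)
  have "W_B n n (\<lambda>x y. \<Phi> x y / 2) \<le> S_R \<mu> \<Phi>"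
    using W_B_le_payoffs[of u \<Phi> n, OF u_nonneg u_stable] payoff_sum by simp
  then show "S_R \<mu> \<Phi> = W_P n \<Phi>" "W_P n \<Phi> = W_B n n (\<lambda>x y. \<Phi> x y / 2)"
    using W_P_ge[OF \<mu>, of \<Phi>] W_P_le_W_B[of n \<Phi>] by linarith+
qed

lemma stable_outcome_exists:
  assumes sym: "\<And>x y. \<Phi> x y = \<Phi> y x"
    and eq: "W_P n \<Phi> = W_B n n (\<lambda>x y. \<Phi> x y / 2)"
  obtains \<mu> u where "stable_outcome n \<Phi> \<mu> u"
proof -
  obtain \<mu> where \<mu>: "\<mu> \<in> roommate_matchings n" "S_R \<mu> \<Phi> = W_P n \<Phi>"
    by (rule W_P_attained)
  obtain \<nu> where \<nu>: "\<nu> \<in> bipartite_matchings n n"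
    "bipartite_value (\<lambda>x y. \<Phi> x y / 2) \<nu> = W_B n n (\<lambda>x y. \<Phi> x y / 2)"
    by (rule W_B_attained)
  have "\<forall>\<nu>'\<in>bipartite_matchings n n.
      bipartite_value (\<lambda>x y. \<Phi> x y / 2) \<nu>' \<le> bipartite_value (\<lambda>x y. \<Phi> x y / 2) \<nu>"
    using \<nu>(2) by (simp add: W_B_ge)
  then obtain u v where uv: "\<And>x. 0 \<le> u x" "\<And>y. 0 \<le> v y" "\<And>x y. \<Phi> x y / 2 \<le> u x + v y"
    "(\<Sum>x\<in>UNIV. real (n x) * u x) + (\<Sum>y\<in>UNIV. real (n y) * v y)
       = bipartite_value (\<lambda>x y. \<Phi> x y / 2) \<nu>"
    by (rule bipartite_strong_duality[OF \<nu>(1)]) blast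
  define w where "w x = u x + v x" for x
  have "\<Phi> x y \<le> w x + w y" for x y
    using uv(3)[of x y] uv(3)[of y x] sym[of x y] by (simp add: w_def)
  moreover have "(\<Sum>x\<in>UNIV. real (n x) * w x) = S_R \<mu> \<Phi>"
    using uv(4) \<nu>(2) \<mu>(2) eq unfolding w_def distrib_left sum.distrib by simp
  ultimately have "stable_outcome n \<Phi> \<mu> w"
    using \<mu>(1) uv(1,2) by (simp add: stable_outcome_def is_outcome_def w_def add_nonneg_nonneg)
  then show thesis by (rule that)
qed

lemma dual_feasible_imp_stable_payoffs:
  assumes sym: "\<And>x y. \<Phi> x y = \<Phi> y x" and "dual_feasible \<Phi> u A"
  shows "0 \<le> u x" "\<Phi> x y \<le> u x + u y"
proof -
  have "\<Phi> x y + A x y \<le> u x + u y" "\<Phi> y x + A y x \<le> u y + u x" "A x y = - A y x"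
    using assms(2) unfolding dual_feasible_def by blast+
  then show "\<Phi> x y \<le> u x + u y" using sym[of x y] by linarith
  show "0 \<le> u x" using assms(2) unfolding dual_feasible_def by blast
qed

lemma stable_outcome_dual_optimal:
  assumes sym: "\<And>x y. \<Phi> x y = \<Phi> y x" and stable: "stable_outcome n \<Phi> \<mu> u"
  shows "dual_optimal n \<Phi> u (\<lambda>_ _. 0)"
proof -
  have "(\<Sum>x\<in>UNIV. u x * real (n x)) \<le> (\<Sum>x\<in>UNIV. u' x * real (n x))"
    if "dual_feasible \<Phi> u' A'" for u' A'
  proof -
    have "(\<Sum>x\<in>UNIV. u x * real (n x)) = W_B n n (\<lambda>x y. \<Phi> x y / 2)"
      using stable stable_outcome_value[OF stable]
      by (simp add: stable_outcome_def is_outcome_def mult.commute)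
    also have "\<dots> \<le> (\<Sum>x\<in>UNIV. u' x * real (n x))"
      using W_B_le_payoffs[of u' \<Phi> n, OF dual_feasible_imp_stable_payoffs[of \<Phi>, OF sym that]]
      by (simp add: mult.commute)
    finally show ?thesis .
  qed
  moreover have "dual_feasible \<Phi> u (\<lambda>_ _. 0)"
    using stable by (simp add: dual_feasible_def stable_outcome_def)
  ultimately show ?thesis
    unfolding dual_optimal_def by blast
qed

lemma stable_roommate_matching_iff:
  "stable_roommate_matching n \<Phi> \<mu> \<longleftrightarrow> (\<exists>u. stable_outcome n \<Phi> \<mu> u)"
  by (auto simp: stable_roommate_matching_def stable_outcome_def is_outcome_def)

theorem theorem2:
  fixes n :: "'x::finite \<Rightarrow> nat" and \<Phi> :: "'x \<Rightarrow> 'x \<Rightarrow> real"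
  assumes sym: "\<forall>x y. \<Phi> x y = \<Phi> y x"
  shows "((\<exists>\<mu>. stable_roommate_matching n \<Phi> \<mu>) \<longleftrightarrow> W_P n \<Phi> = W_B n n (\<lambda>x y. \<Phi> x y / 2))
    \<and> (\<forall>\<mu>. stable_roommate_matching n \<Phi> \<mu> \<longrightarrow> S_R \<mu> \<Phi> = W_P n \<Phi>)
    \<and> (\<forall>\<mu> u. stable_outcome n \<Phi> \<mu> u \<longrightarrow> (\<exists>A. dual_optimal n \<Phi> u A))"
proof -
  have sym': "\<And>x y. \<Phi> x y = \<Phi> y x" using sym by blast
  have "(\<exists>\<mu>. stable_roommate_matching n \<Phi> \<mu>) \<longleftrightarrow> W_P n \<Phi> = W_B n n (\<lambda>x y. \<Phi> x y / 2)"
  proof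
    assume "\<exists>\<mu>. stable_roommate_matching n \<Phi> \<mu>"
    then obtain \<mu> u where "stable_outcome n \<Phi> \<mu> u"
      by (auto simp: stable_roommate_matching_iff)
    then show "W_P n \<Phi> = W_B n n (\<lambda>x y. \<Phi> x y / 2)" by (rule stable_outcome_value(2))
  next
    assume "W_P n \<Phi> = W_B n n (\<lambda>x y. \<Phi> x y / 2)"
    then obtain \<mu> u where "stable_outcome n \<Phi> \<mu> u" by (rule stable_outcome_exists[of \<Phi>, OF sym'])
    then show "\<exists>\<mu>. stable_roommate_matching n \<Phi> \<mu>" by (auto simp: stable_roommate_matching_iff)
  qed
  moreover have "\<forall>\<mu>. stable_roommate_matching n \<Phi> \<mu> \<longrightarrow> S_R \<mu> \<Phi> = W_P n \<Phi>"
    using stable_outcome_value(1) by (auto simp: stable_roommate_matching_iff)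
  moreover have "\<forall>\<mu> u. stable_outcome n \<Phi> \<mu> u \<longrightarrow> (\<exists>A. dual_optimal n \<Phi> u A)"
    using stable_outcome_dual_optimal[of \<Phi>, OF sym'] by blast
  ultimately show ?thesis by blast
qed

end
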